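(* Let $\Phi:D_n\to S_n$ be the homomorphism with $\Phi(s_{1'})=s_1$ and $\Phi(s_i)=s_i$ for $1\le i\le n-1$. If $\pi\in D_n$ is written as $\pi = w_{1}^{j_{1}} t_{2}^{i_{2}} w_{2}^{j_{2}} t_{3}^{i_{3}} \cdots w_{n-1}^{j_{n-1}} t_{n}^{i_{n}}$ with $0\le i_k\le k-1$, $0\le j_k\le 1$, then $\Phi(\pi)=t_2^{i_2}\cdot t_3^{i_3}\cdots t_n^{i_n}$, where on the right $t_k=s_1s_2\cdots s_{k-1}\in S_n$.
   Context: $D_n$ ($n\ge 2$) is the Coxeter group with generators $s_{1'},s_1,\dots,s_{n-1}$ and relations $s^2=1$, $(s_i s_{i+1})^3=1$, $(s_is_j)^2=1$ for $|i-j|\ge 2$, $(s_{1'}s_2)^3=1$, $(s_{1'}s_i)^2=1$ for $i\ne 2$. $S_n$ is the symmetric group with Coxeter generators $s_i=(i,i+1)$, $1\le i\le n-1$. In $D_n$, $t_k=s_1s_2\cdots s_{k-1}$ ($2\le k\le n$) and $w_k=s_k s_{k-1}\cdots s_2 s_1 s_{1'} s_2\cdots s_k$ ($1\le k\le n-1$). Every element of $D_n$ has a unique expression of the stated form. *)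

theory Defs
  imports "HOL-Combinatorics.Transposition"
begin

text \<open>Generators of D_n: Gp is s_{1'}, G i is s_i (1 \<le> i \<le> n-1).\<close>
datatype gen = Gp | G nat

definition valid_gen :: "nat \<Rightarrow> gen \<Rightarrow> bool" where
  "valid_gen n g = (case g of Gp \<Rightarrow> True | G i \<Rightarrow> 1 \<le> i \<and> i \<le> n - 1)"

inductive dn_rel :: "nat \<Rightarrow> gen list \<Rightarrow> gen list \<Rightarrow> bool" for n where
  sq: "valid_gen n g \<Longrightarrow> dn_rel n [g, g] []"
| braid: "1 \<le> i \<Longrightarrow> i + 1 \<le> n - 1 \<Longrightarrow>
     dn_rel n [G i, G (i+1), G i, G (i+1), G i, G (i+1)] []"
| comm: "1 \<le> i \<Longrightarrow> i \<le> n - 1 \<Longrightarrow> 1 \<le> j \<Longrightarrow> j \<le> n - 1 \<Longrightarrow> i + 2 \<le> j \<or> j + 2 \<le> i \<Longrightarrow>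
     dn_rel n [G i, G j, G i, G j] []"
| braid': "2 \<le> n - 1 \<Longrightarrow> dn_rel n [Gp, G 2, Gp, G 2, Gp, G 2] []"
| comm': "1 \<le> i \<Longrightarrow> i \<le> n - 1 \<Longrightarrow> i \<noteq> 2 \<Longrightarrow> dn_rel n [Gp, G i, Gp, G i] []"

text \<open>Two words represent the same element of D_n iff they are related by the
  congruence generated by the defining relations.\<close>
inductive dn_eq :: "nat \<Rightarrow> gen list \<Rightarrow> gen list \<Rightarrow> bool" for n where
  refl: "dn_eq n u u"
| sym: "dn_eq n u v \<Longrightarrow> dn_eq n v u"
| trans: "dn_eq n u v \<Longrightarrow> dn_eq n v w \<Longrightarrow> dn_eq n u w"
| rel: "dn_rel n a b \<Longrightarrow> dn_eq n (u @ a @ v) (u @ b @ v)"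

definition wpow :: "gen list \<Rightarrow> nat \<Rightarrow> gen list" where
  "wpow w j = concat (replicate j w)"

definition tD :: "nat \<Rightarrow> gen list" where
  "tD k = map G [1..<k]"

text \<open>w_k = s_k ... s_2 s_1 s_{1'} s_2 ... s_k\<close>
definition wD :: "nat \<Rightarrow> gen list" where
  "wD k = rev (map G [1..<k+1]) @ [Gp] @ map G [2..<k+1]"

definition normal_word :: "nat \<Rightarrow> (nat \<Rightarrow> nat) \<Rightarrow> (nat \<Rightarrow> nat) \<Rightarrow> gen list" where
  "normal_word n i j = concat (map (\<lambda>k. wpow (wD (k-1)) (j (k-1)) @ wpow (tD k) (i k)) [2..<n+1])"

text \<open>S_n: permutations of nat, product = composition, s_i = (i, i+1).\<close>
definition sS :: "nat \<Rightarrow> nat \<Rightarrow> nat" where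
  "sS i = Transposition.transpose i (i+1)"

fun phi_gen :: "gen \<Rightarrow> nat \<Rightarrow> nat" where
  "phi_gen Gp = sS 1"
| "phi_gen (G i) = sS i"

definition Phi :: "gen list \<Rightarrow> nat \<Rightarrow> nat" where
  "Phi w = foldr (\<circ>) (map phi_gen w) id"

definition tS :: "nat \<Rightarrow> nat \<Rightarrow> nat" where
  "tS k = foldr (\<circ>) (map sS [1..<k]) id"

end

theory Submission
  imports Defs
begin

(* Phi respects every defining relation of D_n, because s_1' and s_1 both go to the
   transposition (1 2) and the Coxeter relations hold for adjacent transpositions; so Phi
   is constant on dn_eq-classes. Each w_k maps to a conjugate of Phi(s_1 s_1') = s_1^2 = 1,
   hence the w-factors of the normal word disappear and only the t-factors survive. *)

lemma Phi_Nil [simp]: "Phi [] = id"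
  by (simp add: Phi_def)

lemma Phi_Cons [simp]: "Phi (g # w) = phi_gen g \<circ> Phi w"
  by (simp add: Phi_def)

lemma Phi_append [simp]: "Phi (u @ v) = Phi u \<circ> Phi v"
  by (induction u) simp_all

lemma Phi_concat: "Phi (concat ws) = foldr (\<circ>) (map Phi ws) id"
  by (induction ws) simp_all

lemma Phi_wpow: "Phi (wpow w m) = Phi w ^^ m"
  by (induction m) (simp_all add: wpow_def)

lemma Phi_tD: "Phi (tD k) = tS k"
  by (simp add: Phi_def tD_def tS_def o_def)

lemma sS_apply: "sS a x = (if x = a then a + 1 else if x = a + 1 then a else x)"
  by (simp add: sS_def transpose_def)

lemma sS_involution: "sS a \<circ> sS a = id"
  by (rule ext) (simp add: sS_apply)

lemma sS_braid: "sS a \<circ> sS (a + 1) \<circ> sS a \<circ> sS (a + 1) \<circ> sS a \<circ> sS (a + 1) = id"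
proof (rule ext)
  fix x
  consider "x = a" | "x = a + 1" | "x = a + 2" | "x \<notin> {a, a + 1, a + 2}" by auto
  then show "(sS a \<circ> sS (a + 1) \<circ> sS a \<circ> sS (a + 1) \<circ> sS a \<circ> sS (a + 1)) x = id x"
    by cases (simp_all add: sS_apply)
qed

lemma sS_commute_sq:
  assumes "a + 1 < b \<or> b + 1 < a"
  shows "sS a \<circ> sS b \<circ> sS a \<circ> sS b = id"
proof (rule ext)
  fix x
  consider "x = a" | "x = a + 1" | "x = b" | "x = b + 1" | "x \<notin> {a, a + 1, b, b + 1}" by auto
  then show "(sS a \<circ> sS b \<circ> sS a \<circ> sS b) x = id x"
    by cases (use assms in \<open>auto simp: sS_apply\<close>)
qed

lemma Phi_dn_rel: "dn_rel n u v \<Longrightarrow> Phi u = Phi v"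
proof (induction rule: dn_rel.induct)
  case (sq g)
  show ?case by (cases g) (simp_all add: sS_involution)
next
  case (braid i)
  show ?case using sS_braid[of i] by (simp add: o_assoc)
next
  case (comm i j)
  then have "i + 1 < j \<or> j + 1 < i" by auto
  then show ?case by (simp add: o_assoc sS_commute_sq)
next
  case braid'
  show ?case using sS_braid[of 1] by (simp add: o_assoc numeral_2_eq_2)
next
  case (comm' i)
  show ?case
  proof (cases "i = 1")
    case True
    then show ?thesis by (simp add: o_assoc sS_involution)
  next
    case False
    with comm' have "1 + 1 < i" by simp
    then show ?thesis by (simp add: o_assoc sS_commute_sq)
  qed
qed

lemma Phi_dn_eq: "dn_eq n u v \<Longrightarrow> Phi u = Phi v"
  by (induction rule: dn_eq.induct) (simp_all add: Phi_dn_rel)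

(* wD 0 is the single letter s_1', so the index must be at least 1. *)
lemma Phi_wD: "Phi (wD (Suc k)) = id"
proof (induction k)
  case 0
  show ?case by (simp add: wD_def sS_involution)
next
  case (Suc k)
  have "wD (Suc (Suc k)) = G (Suc (Suc k)) # wD (Suc k) @ [G (Suc (Suc k))]"
    by (simp add: wD_def)
  then have "Phi (wD (Suc (Suc k))) = sS (Suc (Suc k)) \<circ> Phi (wD (Suc k)) \<circ> sS (Suc (Suc k))"
    by (simp add: o_assoc)
  also have "\<dots> = id"
    unfolding Suc.IH by (simp add: sS_involution)
  finally show ?case .
qed

lemma Phi_normal_word:
  "Phi (normal_word n i j) = foldr (\<circ>) (map (\<lambda>k. tS k ^^ i k) [2..<n+1]) id"
proof -
  have "map (Phi \<circ> (\<lambda>k. wpow (wD (k - 1)) (j (k - 1)) @ wpow (tD k) (i k))) [2..<n+1]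
      = map (\<lambda>k. tS k ^^ i k) [2..<n+1]"
  proof (rule map_cong)
    fix k
    assume "k \<in> set [2..<n+1]"
    then have "k - 1 = Suc (k - 2)" by auto
    then show "(Phi \<circ> (\<lambda>k. wpow (wD (k - 1)) (j (k - 1)) @ wpow (tD k) (i k))) k = tS k ^^ i k"
      by (simp add: Phi_wpow Phi_wD Phi_tD id_funpow)
  qed simp
  then show ?thesis
    unfolding normal_word_def Phi_concat map_map by (simp only:)
qed

theorem mainTheorem4:
  fixes n :: nat and i j :: "nat \<Rightarrow> nat" and \<pi> :: "gen list"
  assumes "n \<ge> 2"
    and "\<forall>k\<in>{2..n}. i k \<le> k - 1"
    and "\<forall>k\<in>{1..n-1}. j k \<le> 1"
    and "\<forall>g\<in>set \<pi>. valid_gen n g"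
    and "dn_eq n \<pi> (normal_word n i j)"
  shows "Phi \<pi> = foldr (\<circ>) (map (\<lambda>k. tS k ^^ i k) [2..<n+1]) id"
  using Phi_dn_eq[OF assms(5)] Phi_normal_word by simp

end
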